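(* Let $\{A_n\}_{n\geqslant 1}$ be i.i.d. nonnegative random variables with Laplace–Stieltjes transform $\alpha(s)=\mathbb{E}[e^{-sA_1}]$, and let $\{B_n\}_{n\geqslant 1}$ be i.i.d. exponentially distributed with rate $\mu>0$, independent of $\{A_n\}$. Let $W_1=0$ and $W_{n+1}=\max\{0,\,B_{n+1}-A_n-W_n\}$ for $n\geqslant 1$, and let $C=\inf\{k\geqslant 1: W_{1+k}=0\}$ be the length of a regeneration cycle. Then $$\mathbb{P}[C=n]=\begin{cases}1-\alpha(\mu), & n=1,\\[2pt] \left[1-\tfrac12\alpha(\mu)\right]\left[\tfrac12\alpha(\mu)\right]^{n-2}\alpha(\mu), & n\geqslant 2.\end{cases}$$ *)

theory Defs
  imports "HOL-Probability.Probability"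
begin

(* Waiting-time recursion, 1-based as in the paper:
   W_1 = 0, W_{n+1} = max 0 (B_{n+1} - A_n - W_n). Index 0 is an unused dummy. *)
fun Wseq :: "(nat \<Rightarrow> 'a \<Rightarrow> real) \<Rightarrow> (nat \<Rightarrow> 'a \<Rightarrow> real) \<Rightarrow> nat \<Rightarrow> 'a \<Rightarrow> real" where
  "Wseq A B 0 \<omega> = 0"
| "Wseq A B (Suc 0) \<omega> = 0"
| "Wseq A B (Suc (Suc n)) \<omega> = max 0 (B (Suc (Suc n)) \<omega> - A (Suc n) \<omega> - Wseq A B (Suc n) \<omega>)"

(* C = inf {k >= 1. W_{1+k} = 0}; if the set is empty, Inf on nat gives 0
   (i.e. the value 0 encodes C = infinity, never equal to any n >= 1). *)
definition cycle_len :: "(nat \<Rightarrow> 'a \<Rightarrow> real) \<Rightarrow> (nat \<Rightarrow> 'a \<Rightarrow> real) \<Rightarrow> 'a \<Rightarrow> nat" where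
  "cycle_len A B \<omega> = Inf {k. k \<ge> 1 \<and> Wseq A B (1 + k) \<omega> = 0}"

end

theory Submission
  imports Defs
begin

text \<open>
  Call the cycle busy at time n if W_2, ..., W_n > 0, i.e. C \<ge> n. Since
  W_{k+1} = max 0 (B_{k+1} - (A_k + W_k)) with B_{k+1} exponential and independent of the past,
  memorylessness gives, for every measurable g \<ge> 0,
    E[1{busy at k+1} g(W_{k+1})] = E[1{busy at k} exp(-\<mu> W_k)] \<alpha> E[g(B)],
  i.e. while the cycle goes on the current waiting time is again Exp(\<mu>). Taking g(u) = exp(-\<mu> u),
  whose mean is 1/2, gives E[1{busy at k} exp(-\<mu> W_k)] = (\<alpha>/2)^(k-1); taking g = 1 gives
  P[C \<ge> k+1] = \<alpha> (\<alpha>/2)^(k-1). P[C = n] is the difference of two consecutive such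
  probabilities, and the event that the cycle never ends is null. The expectations are computed
  on the product of the laws of the finitely many A_j, B_j involved.
\<close>

text \<open>A sample point x stores A_k at Inl k and B_k at Inr k; wait x k is W_k, and coords k
  is the set of coordinates it depends on.\<close>

fun wait :: "(nat + nat \<Rightarrow> real) \<Rightarrow> nat \<Rightarrow> real" where
  "wait x 0 = 0"
| "wait x (Suc 0) = 0"
| "wait x (Suc (Suc n)) = max 0 (x (Inr (Suc (Suc n))) - x (Inl (Suc n)) - wait x (Suc n))"

lemma wait_nonneg: "0 \<le> wait x k"
  by (induct x k rule: wait.induct) auto

lemma Wseq_eq_wait: "Wseq A B k \<omega> = wait (\<lambda>i. case_sum A B i \<omega>) k"
  by (induct A B k \<omega> rule: Wseq.induct) auto

lemma cycle_len_eq_Inf: "cycle_len A B \<omega> = Inf {k. 1 \<le> k \<and> wait (\<lambda>i. case_sum A B i \<omega>) (1 + k) = 0}"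
  by (simp add: cycle_len_def Wseq_eq_wait)

definition coords :: "nat \<Rightarrow> (nat + nat) set" where
  "coords k = Inl ` {1..<k} \<union> Inr ` {2..k}"

lemma finite_coords: "finite (coords k)"
  by (simp add: coords_def)

lemma coords_mono: "k \<le> m \<Longrightarrow> coords k \<subseteq> coords m"
  by (auto simp: coords_def)

lemma coords_Suc_0: "coords (Suc 0) = {}"
  by (auto simp: coords_def)

lemma coords_Suc:
  "1 \<le> k \<Longrightarrow> coords (Suc k) = insert (Inr (Suc k)) (insert (Inl k) (coords k))"
  by (auto simp: coords_def atLeastAtMostSuc_conv atLeastLessThanSuc)

lemma wait_cong: "(\<And>i. i \<in> coords k \<Longrightarrow> x i = y i) \<Longrightarrow> wait x k = wait y k"
proof (induct x k rule: wait.induct)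
  case (3 x n)
  have "wait x (Suc n) = wait y (Suc n)"
    by (rule 3(1)) (use 3(2) in \<open>auto simp: coords_def\<close>)
  then show ?case
    using 3(2) by (simp add: coords_def)
qed simp_all

definition busy :: "(nat + nat \<Rightarrow> real) \<Rightarrow> nat \<Rightarrow> bool" where
  "busy x k \<longleftrightarrow> (\<forall>j\<in>{2..k}. 0 < wait x j)"

lemma busy_cong:
  assumes "\<And>i. i \<in> coords k \<Longrightarrow> x i = y i"
  shows "busy x k = busy y k"
proof -
  have "wait x j = wait y j" if "j \<in> {2..k}" for j
    using that assms coords_mono[of j k] by (intro wait_cong) auto
  then show ?thesis
    by (simp add: busy_def)
qed

lemma coords_notin [simp]: "Inl k \<notin> coords k" "Inr (Suc k) \<notin> coords k"
  by (auto simp: coords_def)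

lemma wait_fun_upd [simp]: "i \<notin> coords k \<Longrightarrow> wait (x(i := v)) k = wait x k"
  by (rule wait_cong) auto

lemma busy_fun_upd [simp]: "i \<notin> coords k \<Longrightarrow> busy (x(i := v)) k = busy x k"
  by (rule busy_cong) auto

lemma busy_Suc_0 [simp]: "busy x (Suc 0)"
  by (simp add: busy_def)

lemma busy_Suc: "1 \<le> k \<Longrightarrow> busy x (Suc k) \<longleftrightarrow> busy x k \<and> 0 < wait x (Suc k)"
  by (auto simp: busy_def atLeastAtMostSuc_conv)

lemma busy_iff_idle_bound: "busy x n \<longleftrightarrow> (\<forall>k\<in>{k. 1 \<le> k \<and> wait x (1 + k) = 0}. n \<le> k)"
proof -
  have pos: "0 < wait x j \<longleftrightarrow> wait x j \<noteq> 0" for j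
    using wait_nonneg[of x j] by linarith
  have "busy x n \<longleftrightarrow> (\<forall>k. 1 \<le> k \<and> k < n \<longrightarrow> wait x (1 + k) \<noteq> 0)"
    unfolding busy_def pos
  proof (intro iffI allI impI ballI)
    fix j assume "\<forall>k. 1 \<le> k \<and> k < n \<longrightarrow> wait x (1 + k) \<noteq> 0" and "j \<in> {2..n}"
    then show "wait x j \<noteq> 0"
      by (cases j) auto
  qed auto
  then show ?thesis
    by (auto simp: not_le[symmetric])
qed

lemma Inf_idle_eq_iff:
  assumes "\<not> (\<forall>k. busy x k)"
  shows "Inf {k. 1 \<le> k \<and> wait x (1 + k) = 0} = n \<longleftrightarrow> busy x n \<and> \<not> busy x (Suc n)"
proof -
  define S where "S = {k. 1 \<le> k \<and> wait x (1 + k) = 0}"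
  have S_ne: "S \<noteq> {}"
    using assms busy_iff_idle_bound[of x] unfolding S_def by blast
  have "Inf S = n \<longleftrightarrow> n \<in> S \<and> (\<forall>k\<in>S. n \<le> k)"
  proof
    assume "Inf S = n"
    then show "n \<in> S \<and> (\<forall>k\<in>S. n \<le> k)"
      using Inf_nat_def1[OF S_ne] cInf_lower[OF _ bdd_below_bot] by auto
  qed (auto intro: cInf_eq_minimum)
  also have "\<dots> \<longleftrightarrow> busy x n \<and> \<not> busy x (Suc n)"
    unfolding busy_iff_idle_bound[of x] S_def[symmetric] by (auto simp: not_less_eq_eq intro: le_antisym)
  finally show ?thesis
    unfolding S_def .
qed

lemma Inf_idle_all_busy:
  assumes "\<forall>k. busy x k"
  shows "{k. 1 \<le> k \<and> wait x (1 + k) = 0} = {}"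
proof -
  have "\<not> (1 \<le> k \<and> wait x (1 + k) = 0)" for k
    using assms busy_iff_idle_bound[of x "Suc k"] by auto
  then show ?thesis
    by blast
qed

lemma busy_Suc_integrand_fun_upd:
  assumes "1 \<le> k"
  shows "(if busy (x(Inr (Suc k) := b)) (Suc k) then g (wait (x(Inr (Suc k) := b)) (Suc k)) else 0)
       = (if busy x k \<and> x (Inl k) + wait x k < b then g (b - (x (Inl k) + wait x k)) else 0)"
proof -
  obtain m where m: "k = Suc m"
    using assms by (cases k) auto
  show ?thesis
    using assms by (auto simp: busy_Suc m max_def diff_diff_eq)
qed

lemma nn_integral_exponential_shift:
  fixes g :: "real \<Rightarrow> ennreal"
  assumes mu: "0 < \<mu>" and c: "0 \<le> c" and g[measurable]: "g \<in> borel_measurable borel"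
  shows "(\<integral>\<^sup>+b. (if c < b then g (b - c) else 0) \<partial>density lborel (exponential_density \<mu>))
       = ennreal (exp (- \<mu> * c)) * (\<integral>\<^sup>+u. g u \<partial>density lborel (exponential_density \<mu>))"
proof -
  have shift: "ennreal (exponential_density \<mu> (c + u)) * (if 0 < u then g u else 0)
             = ennreal (exp (- \<mu> * c)) * (ennreal (exponential_density \<mu> u) * g u)"
    if "u \<noteq> 0" for u
  proof (cases "0 < u")
    case True
    have "exponential_density \<mu> (c + u) = exp (- \<mu> * c) * exponential_density \<mu> u"
      using True c by (simp add: exponential_density_def algebra_simps flip: exp_add)
    then show ?thesis using True mu by (simp add: ennreal_mult mult.assoc)
  qed (use that in \<open>simp add: exponential_density_def\<close>)
  have "(\<integral>\<^sup>+b. (if c < b then g (b - c) else 0) \<partial>density lborel (exponential_density \<mu>))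
      = (\<integral>\<^sup>+b. ennreal (exponential_density \<mu> b) * (if c < b then g (b - c) else 0) \<partial>lborel)"
    by (subst nn_integral_density) auto
  also have "\<dots> = ennreal \<bar>1\<bar> * (\<integral>\<^sup>+u. ennreal (exponential_density \<mu> (c + 1 * u))
                   * (if c < c + 1 * u then g (c + 1 * u - c) else 0) \<partial>lborel)"
    by (rule nn_integral_real_affine) auto
  also have "\<dots> = (\<integral>\<^sup>+u. ennreal (exponential_density \<mu> (c + u)) * (if 0 < u then g u else 0) \<partial>lborel)"
    by (simp cong: if_cong)
  also have "\<dots> = (\<integral>\<^sup>+u. ennreal (exp (- \<mu> * c)) * (ennreal (exponential_density \<mu> u) * g u) \<partial>lborel)"
    by (intro nn_integral_cong_AE eventually_mono[OF AE_lborel_singleton[of 0]] shift)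
  also have "\<dots> = ennreal (exp (- \<mu> * c)) * (\<integral>\<^sup>+u. g u \<partial>density lborel (exponential_density \<mu>))"
    by (subst nn_integral_cmult) (auto simp: nn_integral_density)
  finally show ?thesis .
qed

lemma nn_integral_exp_exponential:
  assumes mu: "0 < \<mu>" and s: "0 \<le> s"
  shows "(\<integral>\<^sup>+u. ennreal (exp (- s * u)) \<partial>density lborel (exponential_density \<mu>)) = ennreal (\<mu> / (\<mu> + s))"
proof -
  interpret exp_law: prob_space "density lborel (exponential_density (\<mu> + s))"
    using mu s by (intro prob_space_exponential_density) simp
  have pointwise: "ennreal (exponential_density \<mu> u) * ennreal (exp (- (s * u)))
      = ennreal (exponential_density (\<mu> + s) u) * ennreal (\<mu> / (\<mu> + s))" for u
  proof -
    have "exponential_density \<mu> u * exp (- (s * u)) = exponential_density (\<mu> + s) u * (\<mu> / (\<mu> + s))"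
      using mu s by (simp add: exponential_density_def field_simps add_pos_nonneg flip: exp_add)
    then show ?thesis
      using mu s by (simp add: exponential_density_nonneg flip: ennreal_mult)
  qed
  have "(\<integral>\<^sup>+u. ennreal (exp (- s * u)) \<partial>density lborel (exponential_density \<mu>))
      = (\<integral>\<^sup>+u. ennreal (\<mu> / (\<mu> + s)) \<partial>density lborel (exponential_density (\<mu> + s)))"
    by (subst (1 2) nn_integral_density) (auto simp: pointwise)
  also have "\<dots> = ennreal (\<mu> / (\<mu> + s))"
    using exp_law.emeasure_space_1 by simp
  finally show ?thesis .
qed

lemma measurable_coordinate_borel:
  assumes "\<And>i. sets (N i) = sets borel" and "i \<in> I"
  shows "(\<lambda>x. x i) \<in> borel_measurable (PiM I N)"
  using measurable_component_singleton[OF assms(2), of N] measurable_cong_sets[OF refl assms(1)[of i]]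
  by blast

lemma measurable_wait:
  assumes N: "\<And>i. sets (N i) = sets borel" and "coords k \<subseteq> I"
  shows "(\<lambda>x. wait x k) \<in> borel_measurable (PiM I N)"
  using assms(2)
proof (induct k rule: induct_nat_012)
  case (ge2 n)
  have "Inr (Suc (Suc n)) \<in> I" "Inl (Suc n) \<in> I" "coords (Suc n) \<subseteq> I"
    using ge2.prems coords_mono[of "Suc n" "Suc (Suc n)"] by (auto simp: coords_def)
  note [measurable] = ge2.hyps(2)[OF this(3)]
    measurable_coordinate_borel[OF N this(1)] measurable_coordinate_borel[OF N this(2)]
  show ?case by simp
qed simp_all

lemma measurable_busy:
  assumes N: "\<And>i. sets (N i) = sets borel" and "coords k \<subseteq> I"
  shows "Measurable.pred (PiM I N) (\<lambda>x. busy x k)"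
proof -
  have "Measurable.pred (PiM I N) (\<lambda>x. 0 < wait x j)" if "j \<in> {2..k}" for j
    using that assms coords_mono[of j k] by (intro borel_measurable_pred_less measurable_wait) auto
  then show ?thesis
    unfolding busy_def by (intro pred_intros_finite) auto
qed

locale regenerative_queue = prob_space M for M :: "'a measure" +
  fixes A B :: "nat \<Rightarrow> 'a \<Rightarrow> real" and \<mu> :: real
  assumes mu_pos: "\<mu> > 0"
    and indep: "indep_vars (\<lambda>_. borel) (\<lambda>i. case i of Inl k \<Rightarrow> A k | Inr k \<Rightarrow> B k)
                 ({Inl k | k. k \<ge> 1} \<union> {Inr k | k. k \<ge> 1})"
    and A_nonneg: "\<And>k \<omega>. k \<ge> 1 \<Longrightarrow> \<omega> \<in> space M \<Longrightarrow> A k \<omega> \<ge> 0"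
    and A_ident: "\<And>k. k \<ge> 1 \<Longrightarrow> distr M borel (A k) = distr M borel (A 1)"
    and B_exp: "\<And>k. k \<ge> 1 \<Longrightarrow> distributed M lborel (B k) (exponential_density \<mu>)"
begin

definition law_A :: "real measure" where
  "law_A = distr M borel (A 1)"

definition law_B :: "real measure" where
  "law_B = density lborel (exponential_density \<mu>)"

definition law :: "nat + nat \<Rightarrow> real measure" where
  "law = case_sum (\<lambda>_. law_A) (\<lambda>_. law_B)"

definition alpha :: real where
  "alpha = integral\<^sup>L M (\<lambda>\<omega>. exp (- \<mu> * A 1 \<omega>))"

lemma law_simps [simp]: "law (Inl k) = law_A" "law (Inr k) = law_B"
  by (simp_all add: law_def)

lemma coords_subset_indices: "coords k \<subseteq> {Inl k | k. k \<ge> 1} \<union> {Inr k | k. k \<ge> 1}"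
  by (auto simp: coords_def)

lemma indep_coords: "indep_vars (\<lambda>_. borel) (case_sum A B) (coords k)"
  using indep_vars_subset[OF indep coords_subset_indices] by (simp add: case_sum_expand_Inr_pointfree)

lemma random_variable_coord: "i \<in> coords k \<Longrightarrow> random_variable borel (case_sum A B i)"
  using conjunct1[OF indep_coords[unfolded indep_vars_def2]] by blast

lemma random_variable_A: "k \<ge> 1 \<Longrightarrow> random_variable borel (A k)"
  using random_variable_coord[of "Inl k" "Suc k"] by (simp add: coords_def)

lemma distr_coord: "i \<in> coords k \<Longrightarrow> distr M borel (case_sum A B i) = law i"
proof (cases i)
  case (Inl j)
  assume "i \<in> coords k"
  then have "j \<ge> 1" using Inl by (auto simp: coords_def)
  then show ?thesis
    using Inl A_ident[of j] by (simp add: law_A_def)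
next
  case (Inr j)
  assume "i \<in> coords k"
  then have "j \<ge> 1" using Inr by (auto simp: coords_def)
  then have "distr M lborel (B j) = law_B"
    using B_exp unfolding distributed_def law_B_def by simp
  moreover have "distr M borel (B j) = distr M lborel (B j)"
    by (rule distr_cong) auto
  ultimately show ?thesis
    using Inr by simp
qed

lemma prob_space_law_A: "prob_space law_A"
  unfolding law_A_def using random_variable_A[of 1] by (simp add: prob_space_distr)

lemma prob_space_law_B: "prob_space law_B"
  unfolding law_B_def by (rule prob_space_exponential_density[OF mu_pos])

lemma prob_space_law: "prob_space (law i)"
  by (cases i) (simp_all add: prob_space_law_A prob_space_law_B)

lemma sets_law_A [measurable_cong]: "sets law_A = sets borel"
  by (simp add: law_A_def)

lemma sets_law_B [measurable_cong]: "sets law_B = sets borel"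
  by (simp add: law_B_def)

lemma sets_law: "sets (law i) = sets borel"
  by (cases i) (simp_all add: sets_law_A sets_law_B)

lemma measurable_law_coords:
  assumes "coords k \<subseteq> I"
  shows "(\<lambda>x. wait x k) \<in> borel_measurable (PiM I law)" "Measurable.pred (PiM I law) (\<lambda>x. busy x k)"
  using sets_law assms by (rule measurable_wait, rule measurable_busy)

lemma product_sigma_finite_law: "product_sigma_finite law"
  unfolding product_sigma_finite_def
  using prob_space_law by (auto intro: prob_space_imp_sigma_finite)

lemma nn_integral_law_A_exp: "(\<integral>\<^sup>+a. ennreal (exp (- \<mu> * a)) \<partial>law_A) = ennreal alpha"
proof -
  have [measurable]: "A 1 \<in> borel_measurable M"
    using random_variable_A by simp
  have "AE \<omega> in M. norm (exp (- \<mu> * A 1 \<omega>)) \<le> 1"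
    using A_nonneg[of 1] mu_pos by auto
  moreover have "(\<lambda>\<omega>. exp (- \<mu> * A 1 \<omega>)) \<in> borel_measurable M"
    by measurable
  ultimately have "integrable M (\<lambda>\<omega>. exp (- \<mu> * A 1 \<omega>))"
    by (rule integrable_const_bound)
  have "(\<integral>\<^sup>+a. ennreal (exp (- \<mu> * a)) \<partial>law_A) = (\<integral>\<^sup>+\<omega>. ennreal (exp (- \<mu> * A 1 \<omega>)) \<partial>M)"
    unfolding law_A_def by (rule nn_integral_distr) (use random_variable_A[of 1] in simp_all)
  also have "\<dots> = ennreal alpha"
    unfolding alpha_def using \<open>integrable M _\<close> by (rule nn_integral_eq_integral) auto
  finally show ?thesis .
qed

lemma alpha_nonneg: "0 \<le> alpha"
  unfolding alpha_def by (rule integral_nonneg_AE) auto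

lemma alpha_le_1: "alpha \<le> 1"
proof -
  have "ennreal alpha \<le> (\<integral>\<^sup>+a. 1 \<partial>law_A)"
    unfolding nn_integral_law_A_exp[symmetric] law_A_def
    using A_nonneg[of 1] mu_pos random_variable_A[of 1]
    by (intro nn_integral_mono_AE) (auto simp: AE_distr_iff)
  also have "\<dots> = 1"
    using prob_space.emeasure_space_1[OF prob_space_law_A] by simp
  finally show ?thesis by simp
qed

lemma nn_integral_excess_after_arrival:
  assumes c: "0 \<le> c" and g[measurable]: "g \<in> borel_measurable borel"
  shows "(\<integral>\<^sup>+a. (\<integral>\<^sup>+b. (if a + c < b then g (b - (a + c)) else 0) \<partial>law_B) \<partial>law_A)
       = ennreal (exp (- \<mu> * c)) * ennreal alpha * (\<integral>\<^sup>+u. g u \<partial>law_B)"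
proof -
  have "AE a in law_A. 0 \<le> a"
    unfolding law_A_def using A_nonneg[of 1] random_variable_A[of 1] by (subst AE_distr_iff) auto
  then have "(\<integral>\<^sup>+a. (\<integral>\<^sup>+b. (if a + c < b then g (b - (a + c)) else 0) \<partial>law_B) \<partial>law_A)
      = (\<integral>\<^sup>+a. ennreal (exp (- \<mu> * c)) * (ennreal (exp (- \<mu> * a)) * (\<integral>\<^sup>+u. g u \<partial>law_B)) \<partial>law_A)"
  proof (rule nn_integral_cong_AE[OF AE_mp, OF _ AE_I2], intro impI)
    fix a :: real assume "0 \<le> a"
    then have "(\<integral>\<^sup>+b. (if a + c < b then g (b - (a + c)) else 0) \<partial>law_B)
      = ennreal (exp (- \<mu> * (a + c))) * (\<integral>\<^sup>+u. g u \<partial>law_B)"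
      unfolding law_B_def using c mu_pos by (intro nn_integral_exponential_shift) auto
    also have "exp (- \<mu> * (a + c)) = exp (- \<mu> * c) * exp (- \<mu> * a)"
      by (simp add: algebra_simps flip: exp_add)
    finally show "(\<integral>\<^sup>+b. (if a + c < b then g (b - (a + c)) else 0) \<partial>law_B)
      = ennreal (exp (- \<mu> * c)) * (ennreal (exp (- \<mu> * a)) * (\<integral>\<^sup>+u. g u \<partial>law_B))"
      by (simp add: ennreal_mult mult.assoc)
  qed
  also have "\<dots> = ennreal (exp (- \<mu> * c)) * ennreal alpha * (\<integral>\<^sup>+u. g u \<partial>law_B)"
    using nn_integral_law_A_exp by (simp add: nn_integral_cmult nn_integral_multc mult.assoc)
  finally show ?thesis .
qed

lemma nn_integral_busy_Suc:
  assumes k: "1 \<le> k" and g[measurable]: "g \<in> borel_measurable borel"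
  shows "(\<integral>\<^sup>+x. (if busy x (Suc k) then g (wait x (Suc k)) else 0) \<partial>PiM (coords (Suc k)) law)
       = (\<integral>\<^sup>+x. (if busy x k then ennreal (exp (- \<mu> * wait x k)) else 0) \<partial>PiM (coords k) law)
         * ennreal alpha * (\<integral>\<^sup>+u. g u \<partial>law_B)"
proof -
  interpret product_sigma_finite law
    by (rule product_sigma_finite_law)
  interpret law_B: prob_space law_B
    by (rule prob_space_law_B)
  define G where "G c = (\<integral>\<^sup>+b. (if c < b then g (b - c) else 0) \<partial>law_B)" for c
  define I where "I = insert (Inl k) (coords k)"
  have I: "finite I" "Inr (Suc k) \<notin> I" "coords (Suc k) = insert (Inr (Suc k)) I" "coords k \<subseteq> I" "Inl k \<in> I"
    unfolding I_def using coords_Suc[OF k] by (auto simp: finite_coords)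
  have [measurable]: "G \<in> borel_measurable borel"
    unfolding G_def by measurable
  note [measurable] = measurable_law_coords[OF subset_refl]
    measurable_law_coords[OF I(4)] measurable_coordinate_borel[OF sets_law I(5)]
  have "(\<lambda>x. if busy x (Suc k) then g (wait x (Suc k)) else 0) \<in> borel_measurable (PiM (coords (Suc k)) law)"
    by measurable
  then have "(\<integral>\<^sup>+x. (if busy x (Suc k) then g (wait x (Suc k)) else 0) \<partial>PiM (coords (Suc k)) law)
      = (\<integral>\<^sup>+x. (\<integral>\<^sup>+b. (if busy (x(Inr (Suc k) := b)) (Suc k)
            then g (wait (x(Inr (Suc k) := b)) (Suc k)) else 0) \<partial>law_B) \<partial>PiM I law)"
    unfolding I(3) by (subst product_nn_integral_insert[OF I(1,2)]) simp_all
  also have "\<dots> = (\<integral>\<^sup>+x. (if busy x k then G (x (Inl k) + wait x k) else 0) \<partial>PiM I law)"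
    by (intro nn_integral_cong) (simp add: busy_Suc_integrand_fun_upd[OF k] G_def)
  also have "\<dots> = (\<integral>\<^sup>+x. (\<integral>\<^sup>+a. (if busy x k then G (a + wait x k) else 0) \<partial>law_A) \<partial>PiM (coords k) law)"
  proof -
    have "(\<lambda>x. if busy x k then G (x (Inl k) + wait x k) else 0) \<in> borel_measurable (PiM I law)"
      by measurable
    then show ?thesis
      unfolding I_def by (subst product_nn_integral_insert) (simp_all add: finite_coords cong: if_cong)
  qed
  also have "\<dots> = (\<integral>\<^sup>+x. (if busy x k then ennreal (exp (- \<mu> * wait x k)) else 0)
                       * (ennreal alpha * (\<integral>\<^sup>+u. g u \<partial>law_B)) \<partial>PiM (coords k) law)"
    using nn_integral_excess_after_arrival[OF wait_nonneg g]
    by (intro nn_integral_cong) (simp add: G_def mult.assoc)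
  also have "\<dots> = (\<integral>\<^sup>+x. (if busy x k then ennreal (exp (- \<mu> * wait x k)) else 0) \<partial>PiM (coords k) law)
                   * (ennreal alpha * (\<integral>\<^sup>+u. g u \<partial>law_B))"
    by (rule nn_integral_multc) measurable
  finally show ?thesis
    by (simp add: mult.assoc)
qed

lemma nn_integral_busy_exp_wait:
  assumes "1 \<le> k"
  shows "(\<integral>\<^sup>+x. (if busy x k then ennreal (exp (- \<mu> * wait x k)) else 0) \<partial>PiM (coords k) law)
       = ennreal ((alpha / 2) ^ (k - 1))"
  using assms
proof (induction k rule: dec_induct)
  case base
  show ?case
    by (simp add: coords_Suc_0 PiM_empty)
next
  case (step k)
  have half: "(\<integral>\<^sup>+u. ennreal (exp (- \<mu> * u)) \<partial>law_B) = ennreal (1 / 2)"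
    using nn_integral_exp_exponential[OF mu_pos, of \<mu>] mu_pos by (simp add: law_B_def)
  have "(\<integral>\<^sup>+x. (if busy x (Suc k) then ennreal (exp (- \<mu> * wait x (Suc k))) else 0) \<partial>PiM (coords (Suc k)) law)
      = (\<integral>\<^sup>+x. (if busy x k then ennreal (exp (- \<mu> * wait x k)) else 0) \<partial>PiM (coords k) law)
        * ennreal alpha * (\<integral>\<^sup>+u. ennreal (exp (- \<mu> * u)) \<partial>law_B)"
    by (rule nn_integral_busy_Suc[OF step.hyps(1)]) measurable
  also have "\<dots> = ennreal ((alpha / 2) ^ (k - 1)) * ennreal alpha * ennreal (1 / 2)"
    unfolding step.IH half ..
  also have "\<dots> = ennreal ((alpha / 2) ^ (k - 1) * alpha * (1 / 2))"
    by (simp only: ennreal_mult mult_nonneg_nonneg zero_le_power divide_nonneg_nonneg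
        alpha_nonneg zero_le_numeral zero_le_one)
  also have "(alpha / 2) ^ (k - 1) * alpha * (1 / 2) = (alpha / 2) ^ (Suc k - 1)"
    using step.hyps(1) by (cases k) simp_all
  finally show ?case .
qed

lemma emeasure_busy_Suc:
  assumes "1 \<le> k"
  shows "emeasure (PiM (coords (Suc k)) law) {x \<in> space (PiM (coords (Suc k)) law). busy x (Suc k)}
       = ennreal (alpha * (alpha / 2) ^ (k - 1))"
proof -
  note [measurable] = measurable_law_coords[OF subset_refl]
  have "emeasure (PiM (coords (Suc k)) law) {x \<in> space (PiM (coords (Suc k)) law). busy x (Suc k)}
      = (\<integral>\<^sup>+x. indicator {x \<in> space (PiM (coords (Suc k)) law). busy x (Suc k)} x \<partial>PiM (coords (Suc k)) law)"
    by (rule nn_integral_indicator[symmetric]) measurable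
  also have "\<dots> = (\<integral>\<^sup>+x. (if busy x (Suc k) then 1 else 0) \<partial>PiM (coords (Suc k)) law)"
    by (intro nn_integral_cong) (simp add: indicator_def)
  also have "\<dots> = ennreal ((alpha / 2) ^ (k - 1)) * ennreal alpha * (\<integral>\<^sup>+u. 1 \<partial>law_B)"
    using nn_integral_busy_Suc[OF assms, of "\<lambda>_. 1"] nn_integral_busy_exp_wait[OF assms] by simp
  also have "\<dots> = ennreal (alpha * (alpha / 2) ^ (k - 1))"
    using prob_space.emeasure_space_1[OF prob_space_law_B] alpha_nonneg
    by (simp add: mult.commute flip: ennreal_mult)
  finally show ?thesis .
qed

lemma distr_coords_vector:
  assumes "coords k \<noteq> {}"
  shows "distr M (PiM (coords k) law) (\<lambda>\<omega>. \<lambda>i\<in>coords k. case_sum A B i \<omega>) = PiM (coords k) law"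
proof -
  have "distr M (PiM (coords k) law) (\<lambda>\<omega>. \<lambda>i\<in>coords k. case_sum A B i \<omega>)
      = distr M (PiM (coords k) (\<lambda>_. borel)) (\<lambda>\<omega>. \<lambda>i\<in>coords k. case_sum A B i \<omega>)"
    by (rule distr_cong) (auto intro!: sets_PiM_cong simp: sets_law)
  also have "\<dots> = PiM (coords k) (\<lambda>i. distr M borel (case_sum A B i))"
    using indep_coords[of k] indep_vars_iff_distr_eq_PiM'[OF assms random_variable_coord[of _ k]] by simp
  also have "\<dots> = PiM (coords k) law"
    by (rule PiM_cong) (simp_all add: distr_coord)
  finally show ?thesis .
qed

definition busy_event :: "nat \<Rightarrow> 'a set" where
  "busy_event k = {\<omega> \<in> space M. busy (\<lambda>i. case_sum A B i \<omega>) k}"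

lemma busy_event_Suc:
  assumes "1 \<le> k"
  shows "busy_event (Suc k) \<in> events" "prob (busy_event (Suc k)) = alpha * (alpha / 2) ^ (k - 1)"
proof -
  define X where "X = (\<lambda>\<omega>. \<lambda>i\<in>coords (Suc k). case_sum A B i \<omega>)"
  define S where "S = {x \<in> space (PiM (coords (Suc k)) law). busy x (Suc k)}"
  have X: "X \<in> measurable M (PiM (coords (Suc k)) law)"
    unfolding X_def using random_variable_coord measurable_cong_sets[OF refl sets_law]
    by (intro measurable_restrict) blast
  have S: "S \<in> sets (PiM (coords (Suc k)) law)"
    unfolding S_def using measurable_law_coords[OF subset_refl] by measurable
  have "busy (X \<omega>) (Suc k) = busy (\<lambda>i. case_sum A B i \<omega>) (Suc k)" for \<omega>
    unfolding X_def by (rule busy_cong) simp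
  then have event: "busy_event (Suc k) = X -` S \<inter> space M"
    unfolding busy_event_def S_def using measurable_space[OF X] by auto
  show "busy_event (Suc k) \<in> events"
    unfolding event using X S by measurable
  have "emeasure M (busy_event (Suc k)) = emeasure (PiM (coords (Suc k)) law) S"
  proof -
    have "coords (Suc k) \<noteq> {}"
      using coords_Suc[OF assms] by simp
    then show ?thesis
      unfolding event using emeasure_distr[OF X S] distr_coords_vector[of "Suc k"] by (simp add: X_def)
  qed
  also have "\<dots> = ennreal (alpha * (alpha / 2) ^ (k - 1))"
    unfolding S_def by (rule emeasure_busy_Suc[OF assms])
  finally show "prob (busy_event (Suc k)) = alpha * (alpha / 2) ^ (k - 1)"
    using alpha_nonneg by (simp add: emeasure_eq_measure)
qed

lemma busy_event_Suc_0: "busy_event (Suc 0) = space M"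
  by (simp add: busy_event_def)

lemma busy_event_in_events: "busy_event k \<in> events"
  using busy_event_Suc(1)[of "k - 1"] busy_event_Suc_0
  by (cases "k \<le> 1") (auto simp: busy_event_def busy_def le_Suc_eq)

lemma busy_event_mono: "1 \<le> k \<Longrightarrow> busy_event (Suc k) \<subseteq> busy_event k"
  by (auto simp: busy_event_def busy_Suc)

lemma prob_busy_event:
  "1 \<le> k \<Longrightarrow> prob (busy_event k) = (if k = 1 then 1 else alpha * (alpha / 2) ^ (k - 2))"
  using busy_event_Suc(2)[of "k - 1"]
  by (cases "k = 1") (simp_all add: busy_event_Suc_0 prob_space numeral_2_eq_2)

definition never_idle :: "'a set" where
  "never_idle = {\<omega> \<in> space M. \<forall>k. busy (\<lambda>i. case_sum A B i \<omega>) k}"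

lemma never_idle_null: "never_idle \<in> null_sets M"
proof -
  have eq: "never_idle = (\<Inter>k. busy_event k)"
    by (auto simp: never_idle_def busy_event_def)
  then have sets: "never_idle \<in> events"
    using busy_event_in_events by auto
  have "prob never_idle \<le> (1 / 2) ^ j" for j
  proof -
    have "prob never_idle \<le> prob (busy_event (j + 2))"
      using busy_event_in_events by (intro finite_measure_mono) (auto simp: eq)
    also have "\<dots> = alpha * (alpha / 2) ^ j"
      by (simp add: prob_busy_event)
    also have "\<dots> \<le> 1 * (1 / 2) ^ j"
      using alpha_nonneg alpha_le_1 by (intro mult_mono power_mono) auto
    finally show ?thesis by simp
  qed
  then have "prob never_idle \<le> 0"
    by (intro LIMSEQ_le_const[OF LIMSEQ_realpow_zero[of "1 / 2 :: real"]]) auto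
  then show ?thesis
    using sets by (simp add: emeasure_eq_measure null_sets_def measure_le_0_iff)
qed

lemma prob_cycle_len_eq:
  assumes "1 \<le> n"
  shows "prob {\<omega> \<in> space M. cycle_len A B \<omega> = n} = prob (busy_event n) - prob (busy_event (Suc n))"
proof -
  txt \<open>On never_idle the cycle length is the unspecified natural Inf {}.\<close>
  have "{\<omega> \<in> space M. cycle_len A B \<omega> = n}
      = (busy_event n - busy_event (Suc n)) \<union> (if Inf {} = n then never_idle else {})"
  proof (rule set_eqI)
    fix \<omega>
    show "\<omega> \<in> {\<omega> \<in> space M. cycle_len A B \<omega> = n}
      \<longleftrightarrow> \<omega> \<in> (busy_event n - busy_event (Suc n)) \<union> (if Inf {} = n then never_idle else {})"
    proof (cases "\<forall>k. busy (\<lambda>i. case_sum A B i \<omega>) k")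
      case True
      then have "cycle_len A B \<omega> = Inf {}"
        by (simp only: cycle_len_eq_Inf Inf_idle_all_busy[OF True])
      then show ?thesis
        using True by (auto simp: busy_event_def never_idle_def)
    next
      case False
      then have "cycle_len A B \<omega> = n \<longleftrightarrow> busy (\<lambda>i. case_sum A B i \<omega>) n \<and> \<not> busy (\<lambda>i. case_sum A B i \<omega>) (Suc n)"
        by (simp only: cycle_len_eq_Inf Inf_idle_eq_iff[OF False])
      then show ?thesis
        using False by (auto simp: busy_event_def never_idle_def)
    qed
  qed
  then have "prob {\<omega> \<in> space M. cycle_len A B \<omega> = n} = prob (busy_event n - busy_event (Suc n))"
    using measure_Un_null_set[OF _ never_idle_null] busy_event_in_events by auto
  also have "\<dots> = prob (busy_event n) - prob (busy_event (Suc n))"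
    by (intro finite_measure_Diff busy_event_in_events busy_event_mono assms)
  finally show ?thesis .
qed

end

theorem theorem3p3:
  fixes M :: "'a measure" and A B :: "nat \<Rightarrow> 'a \<Rightarrow> real" and \<mu> :: real and n :: nat
  assumes "prob_space M"
    and "\<mu> > 0"
    and indep: "prob_space.indep_vars M (\<lambda>_. borel)
                 (\<lambda>i. case i of Inl k \<Rightarrow> A k | Inr k \<Rightarrow> B k)
                 ({Inl k | k. k \<ge> 1} \<union> {Inr k | k. k \<ge> 1})"
    and A_nonneg: "\<And>k \<omega>. k \<ge> 1 \<Longrightarrow> \<omega> \<in> space M \<Longrightarrow> A k \<omega> \<ge> 0"
    and A_ident: "\<And>k. k \<ge> 1 \<Longrightarrow> distr M borel (A k) = distr M borel (A 1)"
    and B_exp: "\<And>k. k \<ge> 1 \<Longrightarrow> distributed M lborel (B k) (exponential_density \<mu>)"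
    and "n \<ge> 1"
  shows "measure M {\<omega> \<in> space M. cycle_len A B \<omega> = n} =
           (let \<alpha> = integral\<^sup>L M (\<lambda>\<omega>. exp (- \<mu> * A 1 \<omega>)) in
            if n = 1 then 1 - \<alpha>
            else (1 - \<alpha> / 2) * (\<alpha> / 2) ^ (n - 2) * \<alpha>)"
proof -
  interpret regenerative_queue M A B \<mu>
    by (intro regenerative_queue.intro regenerative_queue_axioms.intro assms(1-6))
  have "measure M {\<omega> \<in> space M. cycle_len A B \<omega> = n} = prob (busy_event n) - prob (busy_event (Suc n))"
    using \<open>n \<ge> 1\<close> by (rule prob_cycle_len_eq)
  also have "\<dots> = (if n = 1 then 1 - alpha else (1 - alpha / 2) * (alpha / 2) ^ (n - 2) * alpha)"
  proof (cases "n = 1")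
    case False
    then obtain m where n: "n = m + 2"
      using \<open>n \<ge> 1\<close> by (intro that[of "n - 2"]) simp
    have "alpha * (alpha / 2) ^ m - alpha * (alpha / 2) ^ Suc m = (1 - alpha / 2) * (alpha / 2) ^ m * alpha"
      by (simp add: algebra_simps)
    then show ?thesis
      by (simp add: prob_busy_event n)
  qed (simp add: prob_busy_event)
  finally show ?thesis
    by (simp only: Let_def alpha_def)
qed

end
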